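(* For any $R>0$ and $\varphi_0>0$ there exists a unique smooth solution $\varphi(r)$ on $[R,\infty)$ of the problem $$\varphi'(r)=(1+\varphi(r)^2)\big(2-\varphi(r)\coth r\big),\qquad \varphi(R)=\varphi_0.$$ Moreover, $\lim_{r\to\infty}\varphi(r)=2$.
   Context: (This ODE is the equation satisfied by $\varphi=f'$ when the rotational graph $z=f(r)$, $r$ being the hyperbolic distance to a fixed point of $\mathbb{H}^2$, is a translating soliton in $\mathbb{H}^2\times\mathbb{R}$, i.e. has mean curvature equal to its angle function.) *)

theory Defs
  imports "HOL-Analysis.Analysis"
begin

definition coth :: "real \<Rightarrow> real" where
  "coth r = cosh r / sinh r"

text \<open>C-infinity on a set S (one-sided derivatives at boundary points):
  there is a sequence of functions, starting with f, each being the derivative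
  of the previous one on S.\<close>
definition smooth_on_real :: "real set \<Rightarrow> (real \<Rightarrow> real) \<Rightarrow> bool" where
  "smooth_on_real S f \<longleftrightarrow>
     (\<exists>D :: nat \<Rightarrow> real \<Rightarrow> real. D 0 = f \<and>
        (\<forall>k. \<forall>x\<in>S. (D k has_real_derivative D (Suc k) x) (at x within S)))"

definition translator_ivp :: "real \<Rightarrow> real \<Rightarrow> (real \<Rightarrow> real) \<Rightarrow> bool" where
  "translator_ivp R \<phi>0 \<phi> \<longleftrightarrow>
     \<phi> R = \<phi>0 \<and>
     (\<forall>r\<in>{R..}. (\<phi> has_real_derivative
         (1 + (\<phi> r)\<^sup>2) * (2 - \<phi> r * coth r)) (at r within {R..}))"

end

theory Submission
  imports Defs "HOL-Real_Asymp.Real_Asymp"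
begin

text \<open>The field \<open>F r y = (1 + y\<^sup>2) (2 - y coth r)\<close> has the sign of \<open>2 - y coth r\<close>. Since
  \<open>coth\<close> decreases from \<open>coth R\<close> to \<open>1\<close>, \<open>F > 0\<close> for \<open>y \<le> 1 / coth R\<close> and \<open>F < 0\<close> for
  \<open>y \<ge> 2\<close>, so every solution is trapped in the strip between \<open>min \<phi>0 (1 / coth R)\<close> and
  \<open>max \<phi>0 2\<close>. On this strip \<open>F\<close> is globally Lipschitz, which gives uniqueness (Gronwall) and,
  after clamping \<open>y\<close> to the strip, existence (Picard iteration in Bielecki's weighted norm).
  All derivatives of a solution are polynomials in \<open>coth r\<close> and \<open>\<phi> r\<close>, hence smoothness.
  Finally, above \<open>2 + \<epsilon>\<close> a solution decreases at a fixed rate, and below \<open>2 - \<epsilon>\<close> it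
  increases at a fixed rate as soon as \<open>coth r\<close> is close to \<open>1\<close>; so \<open>\<phi> \<longlongrightarrow> 2\<close>.\<close>

section \<open>The hyperbolic cotangent\<close>

lemma coth_gt_1: "0 < r \<Longrightarrow> 1 < coth r"
proof -
  assume r: "0 < r"
  have "cosh r - sinh r > 0" by (simp add: cosh_def sinh_def field_simps)
  thus ?thesis using r by (simp add: coth_def)
qed

lemma coth_antimono: "0 < R \<Longrightarrow> R \<le> r \<Longrightarrow> coth r \<le> coth R"
proof -
  assume "0 < R" "R \<le> r"
  moreover have "0 \<le> sinh (r - R)" using \<open>R \<le> r\<close> by simp
  hence "cosh r * sinh R \<le> cosh R * sinh r" by (simp add: sinh_diff mult.commute)
  ultimately show ?thesis unfolding coth_def by (simp add: field_simps)
qed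

lemma has_real_derivative_coth:
  "0 < r \<Longrightarrow> (coth has_real_derivative 1 - (coth r)\<^sup>2) (at r)"
  unfolding coth_def[abs_def]
  by (rule derivative_eq_intros refl | simp)+
     (use hyperbolic_pythagoras[of r] in \<open>simp add: field_simps power2_eq_square\<close>)

lemma tendsto_coth_at_top: "(coth \<longlongrightarrow> 1) at_top"
  unfolding coth_def[abs_def] cosh_field_def sinh_field_def by real_asymp

section \<open>Smoothness of solutions of polynomial equations\<close>

text \<open>Polynomial expressions in \<open>coth r\<close> and \<open>\<phi> r\<close>; \<open>cpoly_deriv f p\<close> is the derivative of \<open>p\<close>
  along a solution of \<open>\<phi>' = f\<close>, using \<open>coth' = 1 - coth\<^sup>2\<close>.\<close>

datatype cpoly = Const real | Coth | Phi | Plus cpoly cpoly | Times cpoly cpoly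

primrec cpoly_eval :: "cpoly \<Rightarrow> real \<Rightarrow> real \<Rightarrow> real" where
  "cpoly_eval (Const a) c y = a"
| "cpoly_eval Coth c y = c"
| "cpoly_eval Phi c y = y"
| "cpoly_eval (Plus p q) c y = cpoly_eval p c y + cpoly_eval q c y"
| "cpoly_eval (Times p q) c y = cpoly_eval p c y * cpoly_eval q c y"

primrec cpoly_deriv :: "cpoly \<Rightarrow> cpoly \<Rightarrow> cpoly" where
  "cpoly_deriv f (Const a) = Const 0"
| "cpoly_deriv f Coth = Plus (Const 1) (Times (Const (-1)) (Times Coth Coth))"
| "cpoly_deriv f Phi = f"
| "cpoly_deriv f (Plus p q) = Plus (cpoly_deriv f p) (cpoly_deriv f q)"
| "cpoly_deriv f (Times p q) = Plus (Times (cpoly_deriv f p) q) (Times p (cpoly_deriv f q))"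

lemma has_real_derivative_cpoly_eval:
  assumes "S \<subseteq> {0<..}" and "r \<in> S"
    and ode: "\<And>r. r \<in> S \<Longrightarrow> (\<phi> has_real_derivative cpoly_eval f (coth r) (\<phi> r)) (at r within S)"
  shows "((\<lambda>r. cpoly_eval p (coth r) (\<phi> r)) has_real_derivative
           cpoly_eval (cpoly_deriv f p) (coth r) (\<phi> r)) (at r within S)"
proof (induction p)
  case Coth
  have "0 < r" using assms(1,2) by auto
  from has_field_derivative_at_within[OF has_real_derivative_coth[OF this]]
  show ?case by (simp add: power2_eq_square)
qed (auto intro!: derivative_eq_intros ode \<open>r \<in> S\<close>)

lemma smooth_on_real_if_cpoly_ode:
  assumes "S \<subseteq> {0<..}"
    and "\<And>r. r \<in> S \<Longrightarrow> (\<phi> has_real_derivative cpoly_eval f (coth r) (\<phi> r)) (at r within S)"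
  shows "smooth_on_real S \<phi>"
  unfolding smooth_on_real_def
proof (intro exI[of _ "\<lambda>k r. cpoly_eval ((cpoly_deriv f ^^ k) Phi) (coth r) (\<phi> r)"] conjI allI ballI)
  fix k r assume "r \<in> S"
  from has_real_derivative_cpoly_eval[OF assms(1) this assms(2)]
  show "((\<lambda>r. cpoly_eval ((cpoly_deriv f ^^ k) Phi) (coth r) (\<phi> r)) has_real_derivative
          cpoly_eval ((cpoly_deriv f ^^ Suc k) Phi) (coth r) (\<phi> r)) (at r within S)"
    by simp
qed simp

section \<open>Comparison principles for scalar equations\<close>

lemma stays_above:
  fixes x D :: "real \<Rightarrow> real"
  assumes der: "\<And>t. R \<le> t \<Longrightarrow> (x has_real_derivative D t) (at t within {R..})"
    and start: "a \<le> x R"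
    and pushed_up: "\<And>t. R \<le> t \<Longrightarrow> x t < a \<Longrightarrow> 0 < D t"
    and "R \<le> t"
  shows "a \<le> x t"
proof (rule ccontr)
  assume "\<not> a \<le> x t"
  have "continuous_on {R..} x"
    unfolding continuous_on_eq_continuous_within using der DERIV_continuous by blast
  hence "continuous_on {R..t} x" by (rule continuous_on_subset) auto
  then obtain u where u: "u \<in> {R..t}" and u_min: "\<And>s. s \<in> {R..t} \<Longrightarrow> x u \<le> x s"
    using continuous_attains_inf[of "{R..t}" x] \<open>R \<le> t\<close> by auto
  have "x u < a" using u_min[of t] \<open>R \<le> t\<close> \<open>\<not> a \<le> x t\<close> by simp
  hence "R < u" using u start by (cases "u = R") auto
  hence "DERIV x u :> D u" using der[of u] at_within_interior[of u "{R..}"] by simp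
  moreover have "0 < D u" using pushed_up \<open>R < u\<close> \<open>x u < a\<close> by simp
  ultimately obtain d where "0 < d" and left: "\<And>h. 0 < h \<Longrightarrow> h < d \<Longrightarrow> x (u - h) < x u"
    using DERIV_pos_inc_left by blast
  define h where "h = min (d / 2) ((u - R) / 2)"
  have "0 < h" "h < d" using \<open>0 < d\<close> \<open>R < u\<close> by (auto simp: h_def)
  moreover have "h \<le> (u - R) / 2" unfolding h_def by (rule min.cobounded2)
  hence "u - h \<in> {R..t}" using u \<open>0 < h\<close> by auto
  ultimately show False using left u_min by (meson not_le)
qed

lemma stays_below:
  fixes x D :: "real \<Rightarrow> real"
  assumes der: "\<And>t. R \<le> t \<Longrightarrow> (x has_real_derivative D t) (at t within {R..})"
    and start: "x R \<le> b"
    and pushed_down: "\<And>t. R \<le> t \<Longrightarrow> b < x t \<Longrightarrow> D t < 0"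
    and "R \<le> t"
  shows "x t \<le> b"
proof -
  have "- b \<le> - x t"
  proof (rule stays_above[where x = "\<lambda>t. - x t" and D = "\<lambda>t. - D t"])
    show "((\<lambda>t. - x t) has_real_derivative - D s) (at s within {R..})" if "R \<le> s" for s
      using der[OF that] by (rule DERIV_minus)
  qed (use start pushed_down \<open>R \<le> t\<close> in auto)
  thus ?thesis by simp
qed

lemma le_start_if_derivative_nonpos:
  fixes h h' :: "real \<Rightarrow> real"
  assumes der: "\<And>s. R \<le> s \<Longrightarrow> (h has_real_derivative h' s) (at s within {R..})"
    and nonpos: "\<And>s. R \<le> s \<Longrightarrow> h' s \<le> 0"
    and "R \<le> t"
  shows "h t \<le> h R"
proof -
  have "(h has_derivative (\<lambda>d. h' s * d)) (at s within {R..t})" if "R \<le> s" for s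
    using has_field_derivative_subset[OF der[OF that], of "{R..t}"]
    by (simp add: has_field_derivative_def)
  then obtain z where "z \<in> {R..t}" "h t - h R = h' z * (t - R)"
    using mvt_very_simple[OF \<open>R \<le> t\<close>, of h "\<lambda>s d. h' s * d"] by auto
  moreover have "h' z * (t - R) \<le> 0"
    using nonpos[of z] \<open>z \<in> {R..t}\<close> by (simp add: mult_nonpos_nonneg)
  ultimately show ?thesis by simp
qed

lemma eventually_le_if_derivative_le_neg:
  fixes x D :: "real \<Rightarrow> real"
  assumes der: "\<And>t. R \<le> t \<Longrightarrow> (x has_real_derivative D t) (at t within {R..})"
    and pushed_down: "\<And>t. R \<le> t \<Longrightarrow> \<theta> \<le> x t \<Longrightarrow> D t \<le> - \<eta>"
    and "0 < \<eta>"
    and bounded_below: "\<And>t. R \<le> t \<Longrightarrow> lo \<le> x t"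
  shows "\<forall>\<^sub>F t in at_top. x t \<le> \<theta>"
proof -
  have "\<exists>t1\<ge>R. x t1 < \<theta>"
  proof (rule ccontr)
    assume "\<not> (\<exists>t1\<ge>R. x t1 < \<theta>)"
    hence above: "\<theta> \<le> x t" if "R \<le> t" for t
      using that by (auto simp: not_less)
    define T where "T = R + (x R - lo) / \<eta> + 1"
    have "lo \<le> x R" using bounded_below by simp
    hence "R \<le> T" using \<open>0 < \<eta>\<close> by (simp add: T_def)
    have "x T + \<eta> * T \<le> x R + \<eta> * R"
    proof (rule le_start_if_derivative_nonpos
        [where h = "\<lambda>s. x s + \<eta> * s" and h' = "\<lambda>s. D s + \<eta>"])
      show "((\<lambda>s. x s + \<eta> * s) has_real_derivative D s + \<eta>) (at s within {R..})" if "R \<le> s" for s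
        using der[OF that] by (auto intro!: derivative_eq_intros)
      show "D s + \<eta> \<le> 0" if "R \<le> s" for s
        using pushed_down[OF that above[OF that]] by simp
    qed (rule \<open>R \<le> T\<close>)
    moreover have "\<eta> * (T - R) = x R - lo + \<eta>" using \<open>0 < \<eta>\<close> by (simp add: T_def field_simps)
    ultimately have "x T < lo" using \<open>0 < \<eta>\<close> by (simp add: algebra_simps)
    with bounded_below \<open>R \<le> T\<close> show False by force
  qed
  then obtain t1 where "R \<le> t1" "x t1 < \<theta>" by blast
  have "x t \<le> \<theta>" if "t1 \<le> t" for t
  proof (rule stays_below[OF _ _ _ that])
    show "(x has_real_derivative D s) (at s within {t1..})" if "t1 \<le> s" for s
      using has_field_derivative_subset[OF der, of s "{t1..}"] \<open>R \<le> t1\<close> that by auto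
    show "x t1 \<le> \<theta>" using \<open>x t1 < \<theta>\<close> by simp
    show "D s < 0" if "t1 \<le> s" "\<theta> < x s" for s
      using pushed_down[of s] that \<open>R \<le> t1\<close> \<open>0 < \<eta>\<close> by simp
  qed
  thus ?thesis by (auto simp: eventually_at_top_linorder)
qed

lemma eventually_ge_if_derivative_ge_pos:
  fixes x D :: "real \<Rightarrow> real"
  assumes der: "\<And>t. R \<le> t \<Longrightarrow> (x has_real_derivative D t) (at t within {R..})"
    and pushed_up: "\<And>t. R \<le> t \<Longrightarrow> x t \<le> \<theta> \<Longrightarrow> \<eta> \<le> D t"
    and "0 < \<eta>"
    and bounded_above: "\<And>t. R \<le> t \<Longrightarrow> x t \<le> hi"
  shows "\<forall>\<^sub>F t in at_top. \<theta> \<le> x t"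
proof -
  have "\<forall>\<^sub>F t in at_top. - x t \<le> - \<theta>"
  proof (rule eventually_le_if_derivative_le_neg[where x = "\<lambda>t. - x t" and D = "\<lambda>t. - D t" and lo = "- hi"])
    show "((\<lambda>t. - x t) has_real_derivative - D s) (at s within {R..})" if "R \<le> s" for s
      using der[OF that] by (rule DERIV_minus)
  qed (use pushed_up \<open>0 < \<eta>\<close> bounded_above in auto)
  thus ?thesis by simp
qed

lemma lipschitz_ode_unique:
  fixes x y Dx Dy :: "real \<Rightarrow> real"
  assumes dx: "\<And>t. R \<le> t \<Longrightarrow> (x has_real_derivative Dx t) (at t within {R..})"
    and dy: "\<And>t. R \<le> t \<Longrightarrow> (y has_real_derivative Dy t) (at t within {R..})"
    and lip: "\<And>t. R \<le> t \<Longrightarrow> \<bar>Dx t - Dy t\<bar> \<le> L * \<bar>x t - y t\<bar>"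
    and "x R = y R" and "R \<le> t"
  shows "x t = y t"
proof -
  define h where "h s = (x s - y s)\<^sup>2 * exp (- 2 * L * (s - R))" for s
  define h' where "h' s = 2 * ((x s - y s) * (Dx s - Dy s) - L * (x s - y s)\<^sup>2) * exp (- 2 * L * (s - R))" for s
  have "h t \<le> h R"
  proof (rule le_start_if_derivative_nonpos[OF _ _ \<open>R \<le> t\<close>])
    show "(h has_real_derivative h' s) (at s within {R..})" if "R \<le> s" for s
      unfolding h_def[abs_def] h'_def
      by (rule derivative_eq_intros refl dx dy that)+ (simp add: algebra_simps power2_eq_square)
    show "h' s \<le> 0" if "R \<le> s" for s
    proof -
      have "(x s - y s) * (Dx s - Dy s) \<le> \<bar>x s - y s\<bar> * \<bar>Dx s - Dy s\<bar>"
        by (metis abs_ge_self abs_mult)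
      also have "\<dots> \<le> \<bar>x s - y s\<bar> * (L * \<bar>x s - y s\<bar>)"
        using lip[OF that] by (intro mult_left_mono) auto
      also have "\<dots> = L * (x s - y s)\<^sup>2" by (simp add: power2_eq_square)
      finally have "(x s - y s) * (Dx s - Dy s) \<le> L * (x s - y s)\<^sup>2" .
      thus ?thesis by (simp add: h'_def mult_nonpos_nonneg)
    qed
  qed
  hence "(x t - y t)\<^sup>2 \<le> 0" using \<open>x R = y R\<close> by (simp add: h_def mult_le_0_iff)
  thus ?thesis by simp
qed

section \<open>Existence for bounded Lipschitz fields\<close>

lemma has_real_derivative_integral_from:
  fixes g :: "real \<Rightarrow> real"
  assumes "continuous_on UNIV g" and "R \<le> t"
  shows "((\<lambda>t. integral {R..t} g) has_real_derivative g t) (at t within {R..})"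
proof -
  have "((\<lambda>t. integral {R..t} g) has_real_derivative g t) (at t within {R..t + 1})"
    using assms by (intro integral_has_real_derivative continuous_on_subset[OF assms(1)]) auto
  moreover have "at t within {R..t + 1} = at t within {R..}"
    by (rule at_within_nhd[where S = "{..<t + 1}"]) auto
  ultimately show ?thesis by simp
qed

lemma continuous_on_integral_from:
  fixes g :: "real \<Rightarrow> real"
  assumes "continuous_on UNIV g"
  shows "continuous_on UNIV (\<lambda>t. integral {R..max R t} g)"
proof -
  have "continuous_on {R..} (\<lambda>t. integral {R..t} g)"
    unfolding continuous_on_eq_continuous_within
    using has_real_derivative_integral_from[OF assms] DERIV_continuous by blast
  thus ?thesis
    by (rule continuous_on_compose2[of _ _ UNIV "\<lambda>t. max R t"]) (auto intro!: continuous_intros)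
qed

lemma has_integral_exp_shifted:
  fixes K :: real
  assumes "0 < K" and "R \<le> v"
  shows "((\<lambda>s. exp (K * (s - R))) has_integral (exp (K * (v - R)) - 1) / K) {R..v}"
proof -
  have "((\<lambda>s. exp (K * (s - R))) has_integral exp (K * (v - R)) / K - exp (K * (R - R)) / K) {R..v}"
    using assms
    by (intro fundamental_theorem_of_calculus)
       (auto intro!: derivative_eq_intros simp: has_real_derivative_iff_has_vector_derivative[symmetric])
  thus ?thesis by (simp add: diff_divide_distrib)
qed

lemma continuous_on_field_along:
  assumes "continuous_on UNIV (\<lambda>p. G (fst p) (snd p))" and "continuous_on UNIV w"
  shows "continuous_on UNIV (\<lambda>s. G s (w s))"
proof -
  have "continuous_on UNIV (\<lambda>s. (\<lambda>p. G (fst p) (snd p)) (s, w s))"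
    by (rule continuous_on_compose2[OF assms(1)]) (auto intro!: continuous_intros assms(2))
  thus ?thesis by simp
qed

text \<open>Picard's operator for \<open>x' = G t x, x R = y0\<close>, conjugated by \<open>x t = exp (K (t - R)) w t\<close>
  (Bielecki's weighted norm) and extended constantly to the left of \<open>R\<close>, so that it acts on
  bounded continuous functions on the whole line.\<close>

definition bielecki_picard ::
    "(real \<Rightarrow> real \<Rightarrow> real) \<Rightarrow> real \<Rightarrow> real \<Rightarrow> real \<Rightarrow> (real \<Rightarrow> real) \<Rightarrow> real \<Rightarrow> real" where
  "bielecki_picard G K R y0 w t =
     exp (- K * (max R t - R)) * (y0 + integral {R..max R t} (\<lambda>s. G s (exp (K * (s - R)) * w s)))"

lemma bielecki_picard_in_bcontfun:
  assumes cont: "continuous_on UNIV (\<lambda>p. G (fst p) (snd p))"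
    and bounded: "\<And>s y. \<bar>G s y\<bar> \<le> M"
    and "0 < K" and "continuous_on UNIV w"
  shows "bielecki_picard G K R y0 w \<in> bcontfun"
proof (rule bcontfun_normI)
  let ?g = "\<lambda>s. G s (exp (K * (s - R)) * w s)"
  have g: "continuous_on UNIV ?g"
    by (rule continuous_on_field_along[OF cont]) (auto intro!: continuous_intros assms(4))
  show "continuous_on UNIV (bielecki_picard G K R y0 w)"
    unfolding bielecki_picard_def[abs_def]
    by (auto intro!: continuous_intros continuous_on_integral_from[OF g])
  fix t
  define u where "u = max R t - R"
  have "0 \<le> u" by (simp add: u_def)
  have int_bound: "\<bar>integral {R..max R t} ?g\<bar> \<le> M * u"
    using integral_bound[of R "max R t" ?g M] g bounded
    by (auto simp: u_def intro: continuous_on_subset)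
  have "u * exp (- K * u) \<le> 1 / K"
  proof -
    have "K * u \<le> exp (K * u)" using exp_ge_add_one_self[of "K * u"] by linarith
    hence "K * u * exp (- K * u) \<le> exp (K * u) * exp (- K * u)"
      by (intro mult_right_mono) auto
    thus ?thesis using \<open>0 < K\<close> by (simp add: field_simps flip: exp_add)
  qed
  have "0 \<le> M" using bounded[of 0 0] by linarith
  have "exp (- K * u) * \<bar>y0 + integral {R..max R t} ?g\<bar> \<le> exp (- K * u) * (\<bar>y0\<bar> + M * u)"
    using int_bound by (intro mult_left_mono) auto
  also have "\<dots> = exp (- K * u) * \<bar>y0\<bar> + M * (u * exp (- K * u))"
    by (simp add: algebra_simps)
  also have "\<dots> \<le> 1 * \<bar>y0\<bar> + M * (1 / K)"
    using \<open>0 < K\<close> \<open>0 \<le> u\<close> \<open>0 \<le> M\<close> \<open>u * exp (- K * u) \<le> 1 / K\<close>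
    by (intro add_mono mult_right_mono mult_left_mono) auto
  finally show "norm (bielecki_picard G K R y0 w t) \<le> \<bar>y0\<bar> + M / K"
    by (simp add: bielecki_picard_def u_def abs_mult)
qed

lemma bielecki_picard_contraction:
  assumes cont: "continuous_on UNIV (\<lambda>p. G (fst p) (snd p))"
    and lip: "\<And>s y z. \<bar>G s y - G s z\<bar> \<le> L * \<bar>y - z\<bar>"
    and "0 < K" and "continuous_on UNIV w1" and "continuous_on UNIV w2"
    and close: "\<And>s. \<bar>w1 s - w2 s\<bar> \<le> d"
  shows "\<bar>bielecki_picard G K R y0 w1 t - bielecki_picard G K R y0 w2 t\<bar> \<le> L / K * d"
proof -
  define v where "v = max R t"
  have "R \<le> v" by (simp add: v_def)
  let ?g = "\<lambda>w s. G s (exp (K * (s - R)) * w s)"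
  have integrable: "?g w integrable_on {R..v}" if "continuous_on UNIV w" for w
    by (intro integrable_continuous_interval continuous_on_subset[OF continuous_on_field_along[OF cont]])
       (auto intro!: continuous_intros that)
  have "0 \<le> d" using close[of 0] by linarith
  have "0 \<le> L" using lip[of 0 1 0] abs_ge_zero[of "G 0 1 - G 0 0"] by simp
  have pointwise: "\<bar>?g w1 s - ?g w2 s\<bar> \<le> L * d * exp (K * (s - R))" for s
  proof -
    have "\<bar>?g w1 s - ?g w2 s\<bar> \<le> L * (exp (K * (s - R)) * \<bar>w1 s - w2 s\<bar>)"
      using lip[of s "exp (K * (s - R)) * w1 s" "exp (K * (s - R)) * w2 s"]
      by (simp add: abs_mult flip: right_diff_distrib)
    also have "\<dots> \<le> L * (exp (K * (s - R)) * d)"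
      using close[of s] \<open>0 \<le> L\<close> by (intro mult_left_mono) auto
    finally show ?thesis by (simp add: algebra_simps)
  qed
  have exp_integral: "((\<lambda>s. L * d * exp (K * (s - R))) has_integral L * d * ((exp (K * (v - R)) - 1) / K)) {R..v}"
    using has_integral_mult_right[OF has_integral_exp_shifted[OF \<open>0 < K\<close> \<open>R \<le> v\<close>]] .
  have "\<bar>integral {R..v} (\<lambda>s. ?g w1 s - ?g w2 s)\<bar>
        \<le> integral {R..v} (\<lambda>s. L * d * exp (K * (s - R)))"
    using integral_norm_bound_integral[OF integrable_diff[OF integrable[OF assms(4)] integrable[OF assms(5)]]
        has_integral_integrable[OF exp_integral]] pointwise by simp
  also have "\<dots> = L * d * ((exp (K * (v - R)) - 1) / K)"
    using exp_integral by (rule integral_unique)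
  finally have int_diff:
      "\<bar>integral {R..v} (?g w1) - integral {R..v} (?g w2)\<bar> \<le> L * d * ((exp (K * (v - R)) - 1) / K)"
    using integral_diff[OF integrable[OF assms(4)] integrable[OF assms(5)]] by simp
  have "\<bar>bielecki_picard G K R y0 w1 t - bielecki_picard G K R y0 w2 t\<bar>
        = exp (- K * (v - R)) * \<bar>integral {R..v} (?g w1) - integral {R..v} (?g w2)\<bar>"
    by (simp add: bielecki_picard_def v_def abs_mult flip: right_diff_distrib)
  also have "\<dots> \<le> exp (- K * (v - R)) * (L * d * ((exp (K * (v - R)) - 1) / K))"
    using int_diff by (intro mult_left_mono) auto
  also have "\<dots> = L / K * d * (1 - exp (- K * (v - R)))"
    by (simp add: field_simps flip: exp_add)
  also have "\<dots> \<le> L / K * d"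
    using \<open>0 \<le> L\<close> \<open>0 \<le> d\<close> \<open>0 < K\<close> by (intro mult_left_le) auto
  finally show ?thesis .
qed

lemma ivp_if_integral_equation:
  fixes g x :: "real \<Rightarrow> real"
  assumes "continuous_on UNIV g" and eq: "\<And>t. R \<le> t \<Longrightarrow> x t = y0 + integral {R..t} g"
    and "R \<le> t"
  shows "(x has_real_derivative g t) (at t within {R..})"
proof -
  have "((\<lambda>t. y0 + integral {R..t} g) has_real_derivative g t) (at t within {R..})"
    using has_real_derivative_integral_from[OF assms(1,3)] by (auto intro!: derivative_eq_intros)
  thus ?thesis
    by (rule has_field_derivative_transform_within[where d = 1]) (use eq \<open>R \<le> t\<close> in auto)
qed

lemma lipschitz_ode_exists:
  fixes G :: "real \<Rightarrow> real \<Rightarrow> real"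
  assumes cont: "continuous_on UNIV (\<lambda>p. G (fst p) (snd p))"
    and lip: "\<And>s y z. \<bar>G s y - G s z\<bar> \<le> L * \<bar>y - z\<bar>"
    and bounded: "\<And>s y. \<bar>G s y\<bar> \<le> M"
  shows "\<exists>x. x R = y0 \<and> (\<forall>t\<ge>R. (x has_real_derivative G t (x t)) (at t within {R..}))"
proof -
  have "0 \<le> L" using lip[of 0 1 0] abs_ge_zero[of "G 0 1 - G 0 0"] by simp
  define K where "K = 2 * L + 1"
  have "0 < K" "L / K < 1" using \<open>0 \<le> L\<close> by (auto simp: K_def)
  define P where "P w = Bcontfun (bielecki_picard G K R y0 (apply_bcontfun w))" for w :: "real \<Rightarrow>\<^sub>C real"
  have P_apply: "apply_bcontfun (P w) = bielecki_picard G K R y0 (apply_bcontfun w)" for w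
    unfolding P_def
    by (rule Bcontfun_inverse[OF bielecki_picard_in_bcontfun[OF cont bounded \<open>0 < K\<close>]]) simp
  have "dist (P w1) (P w2) \<le> L / K * dist w1 w2" for w1 w2
  proof (rule dist_bound)
    fix t
    show "dist (P w1 t) (P w2 t) \<le> L / K * dist w1 w2"
      unfolding P_apply dist_real_def
      by (rule bielecki_picard_contraction[OF cont lip \<open>0 < K\<close>])
         (use dist_bounded[of w1 _ w2] in \<open>auto simp: dist_real_def\<close>)
  qed
  then obtain w where "P w = w"
    using banach_fix_type[of "L / K" P] \<open>0 \<le> L\<close> \<open>0 < K\<close> \<open>L / K < 1\<close> by auto
  define x where "x s = exp (K * (s - R)) * w s" for s
  have x_eq: "x t = y0 + integral {R..t} (\<lambda>s. G s (x s))" if "R \<le> t" for t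
  proof -
    have "w t = bielecki_picard G K R y0 w t" using \<open>P w = w\<close> P_apply by metis
    thus ?thesis
      using that by (simp add: x_def bielecki_picard_def max_def mult.assoc[symmetric] flip: exp_add)
  qed
  have G_along_x: "continuous_on UNIV (\<lambda>s. G s (x s))"
    unfolding x_def by (rule continuous_on_field_along[OF cont]) (auto intro!: continuous_intros)
  show ?thesis
  proof (intro exI[of _ x] conjI allI impI)
    show "x R = y0" using x_eq[of R] by simp
    fix t :: real assume "R \<le> t"
    show "(x has_real_derivative G t (x t)) (at t within {R..})"
      by (rule ivp_if_integral_equation[OF G_along_x x_eq \<open>R \<le> t\<close>])
  qed
qed

section \<open>The translator equation\<close>

definition translator_rhs :: "real \<Rightarrow> real \<Rightarrow> real" where
  "translator_rhs r y = (1 + y\<^sup>2) * (2 - y * coth r)"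

definition translator_cpoly :: cpoly where
  "translator_cpoly =
     Times (Plus (Const 1) (Times Phi Phi)) (Plus (Const 2) (Times (Const (-1)) (Times Phi Coth)))"

lemma cpoly_eval_translator_cpoly: "cpoly_eval translator_cpoly (coth r) y = translator_rhs r y"
  by (simp add: translator_cpoly_def translator_rhs_def power2_eq_square)

lemma translator_ivp_iff:
  "translator_ivp R \<phi>0 \<phi> \<longleftrightarrow>
     \<phi> R = \<phi>0 \<and> (\<forall>r\<ge>R. (\<phi> has_real_derivative translator_rhs r (\<phi> r)) (at r within {R..}))"
  by (auto simp: translator_ivp_def translator_rhs_def)

lemma smooth_on_real_if_translator_ivp:
  "0 < R \<Longrightarrow> translator_ivp R \<phi>0 \<phi> \<Longrightarrow> smooth_on_real {R..} \<phi>"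
  by (rule smooth_on_real_if_cpoly_ode[where f = translator_cpoly])
     (auto simp: translator_ivp_iff cpoly_eval_translator_cpoly)

lemma translator_rhs_pos:
  assumes "0 < R" "R \<le> s" "y \<le> 1 / coth R"
  shows "0 < translator_rhs s y"
proof -
  have "y * coth s < 2"
  proof (cases "y \<le> 0")
    case True
    have "y * coth s \<le> 0" using True coth_gt_1[of s] assms by (intro mult_nonpos_nonneg) auto
    thus ?thesis by simp
  next
    case False
    hence "y * coth s \<le> y * coth R" using coth_antimono assms by simp
    also have "\<dots> \<le> 1" using assms coth_gt_1[of R] by (simp add: field_simps)
    finally show ?thesis by simp
  qed
  thus ?thesis by (simp add: translator_rhs_def add_pos_nonneg)
qed

lemma translator_rhs_neg:
  assumes "0 < s" "2 \<le> y"
  shows "translator_rhs s y < 0"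
proof -
  have "y < y * coth s"
    using mult_strict_left_mono[OF coth_gt_1[OF \<open>0 < s\<close>], of y] \<open>2 \<le> y\<close> by simp
  hence "2 < y * coth s" using \<open>2 \<le> y\<close> by linarith
  thus ?thesis by (simp add: translator_rhs_def mult_pos_neg add_pos_nonneg)
qed

lemma translator_rhs_lipschitz:
  assumes "0 < R" "R \<le> s" "0 \<le> y" "y \<le> b" "0 \<le> z" "z \<le> b"
  shows "\<bar>translator_rhs s y - translator_rhs s z\<bar> \<le> (4 * b + coth R * (1 + 3 * b\<^sup>2)) * \<bar>y - z\<bar>"
proof -
  let ?c = "coth s"
  have c: "0 \<le> ?c" "?c \<le> coth R" using coth_gt_1[of s] coth_antimono assms by force+
  define Q where "Q = 2 * (y + z) - ?c * (1 + y\<^sup>2 + y * z + z\<^sup>2)"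
  have factor: "translator_rhs s y - translator_rhs s z = (y - z) * Q"
    by (simp add: translator_rhs_def Q_def algebra_simps power2_eq_square)
  define P where "P = ?c * (1 + y\<^sup>2 + y * z + z\<^sup>2)"
  define T where "T = coth R * (1 + 3 * b\<^sup>2)"
  have "y\<^sup>2 \<le> b\<^sup>2" "z\<^sup>2 \<le> b\<^sup>2" "y * z \<le> b * b"
    using assms by (auto intro: power_mono mult_mono)
  hence "P \<le> T"
    unfolding P_def T_def using assms c by (intro mult_mono) (auto simp: power2_eq_square)
  moreover have "0 \<le> P" using assms c by (simp add: P_def)
  ultimately have "\<bar>Q\<bar> \<le> 4 * b + T"
    using assms by (simp add: Q_def flip: P_def)
  hence "\<bar>y - z\<bar> * \<bar>Q\<bar> \<le> \<bar>y - z\<bar> * (4 * b + T)" by (rule mult_left_mono) simp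
  thus ?thesis unfolding factor abs_mult T_def by (metis mult.commute)
qed

lemma translator_rhs_bounded:
  assumes "0 < R" "R \<le> s" "0 \<le> y" "y \<le> b"
  shows "\<bar>translator_rhs s y\<bar> \<le> (1 + b\<^sup>2) * (2 + b * coth R)"
proof -
  have c: "0 \<le> coth s" "coth s \<le> coth R" using coth_gt_1[of s] coth_antimono assms by force+
  hence "y * coth s \<le> b * coth R" using assms by (intro mult_mono) auto
  moreover have "0 \<le> y * coth s" using assms c by simp
  ultimately have "\<bar>2 - y * coth s\<bar> \<le> 2 + b * coth R" by (simp add: abs_le_iff)
  moreover have "1 + y\<^sup>2 \<le> 1 + b\<^sup>2" using assms by (auto intro: power_mono)
  ultimately show ?thesis
    by (simp add: translator_rhs_def abs_mult mult_mono)
qed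

lemma continuous_on_translator_rhs_clamped:
  assumes "0 < R"
  shows "continuous_on UNIV (\<lambda>p. translator_rhs (max R (fst p)) (max a (min b (snd p))))"
proof -
  have "sinh (max R s) \<noteq> 0" for s using assms by simp
  thus ?thesis
    unfolding translator_rhs_def coth_def by (auto intro!: continuous_intros)
qed

lemma translator_rhs_le:
  assumes "0 < s" "2 \<le> y"
  shows "translator_rhs s y \<le> 2 - y"
proof -
  have "y \<le> y * coth s" using coth_gt_1[OF \<open>0 < s\<close>] assms by simp
  hence "2 - y * coth s \<le> 0" using assms by linarith
  hence "(1 + y\<^sup>2) * (2 - y * coth s) \<le> 1 * (2 - y * coth s)"
    by (intro mult_right_mono_neg) auto
  thus ?thesis using \<open>y \<le> y * coth s\<close> by (simp add: translator_rhs_def)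
qed

lemma translator_rhs_ge:
  assumes "0 < s" "0 \<le> y" "y \<le> \<theta>" "coth s \<le> \<kappa>" "\<theta> * \<kappa> \<le> 2"
  shows "2 - \<theta> * \<kappa> \<le> translator_rhs s y"
proof -
  have "y * coth s \<le> \<theta> * \<kappa>" using assms coth_gt_1[of s] by (intro mult_mono) auto
  hence "1 * (2 - \<theta> * \<kappa>) \<le> (1 + y\<^sup>2) * (2 - y * coth s)"
    using assms by (intro mult_mono) auto
  thus ?thesis by (simp add: translator_rhs_def)
qed

lemma translator_ivp_bounds:
  assumes "0 < R" and ivp: "translator_ivp R \<phi>0 \<phi>" and "R \<le> t"
  shows "min \<phi>0 (1 / coth R) \<le> \<phi> t \<and> \<phi> t \<le> max \<phi>0 2"
proof -
  have der: "\<And>t. R \<le> t \<Longrightarrow> (\<phi> has_real_derivative translator_rhs t (\<phi> t)) (at t within {R..})"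
    and "\<phi> R = \<phi>0"
    using ivp by (auto simp: translator_ivp_iff)
  have "min \<phi>0 (1 / coth R) \<le> \<phi> t"
    by (rule stays_above[OF der _ _ \<open>R \<le> t\<close>])
       (use \<open>\<phi> R = \<phi>0\<close> \<open>0 < R\<close> in \<open>auto intro: translator_rhs_pos\<close>)
  moreover have "\<phi> t \<le> max \<phi>0 2"
    by (rule stays_below[OF der _ _ \<open>R \<le> t\<close>])
       (use \<open>\<phi> R = \<phi>0\<close> \<open>0 < R\<close> in \<open>auto intro: translator_rhs_neg\<close>)
  ultimately show ?thesis ..
qed

lemma translator_ivp_pos:
  assumes "0 < R" "0 < \<phi>0" "translator_ivp R \<phi>0 \<phi>" "R \<le> t"
  shows "0 < \<phi> t"
proof -
  have "0 < min \<phi>0 (1 / coth R)" using assms coth_gt_1[of R] by simp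
  thus ?thesis using translator_ivp_bounds[OF assms(1,3,4)] by linarith
qed

lemma translator_ivp_unique:
  assumes "0 < R" "0 < \<phi>0" "translator_ivp R \<phi>0 \<phi>" "translator_ivp R \<phi>0 \<psi>" "R \<le> t"
  shows "\<psi> t = \<phi> t"
proof (rule lipschitz_ode_unique[where x = \<psi> and y = \<phi> and R = R
      and Dx = "\<lambda>s. translator_rhs s (\<psi> s)" and Dy = "\<lambda>s. translator_rhs s (\<phi> s)"
      and L = "4 * max \<phi>0 2 + coth R * (1 + 3 * (max \<phi>0 2)\<^sup>2)"])
  show "(\<psi> has_real_derivative translator_rhs s (\<psi> s)) (at s within {R..})"
    "(\<phi> has_real_derivative translator_rhs s (\<phi> s)) (at s within {R..})" if "R \<le> s" for s
    using assms that by (auto simp: translator_ivp_iff)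
  show "\<bar>translator_rhs s (\<psi> s) - translator_rhs s (\<phi> s)\<bar>
        \<le> (4 * max \<phi>0 2 + coth R * (1 + 3 * (max \<phi>0 2)\<^sup>2)) * \<bar>\<psi> s - \<phi> s\<bar>" if "R \<le> s" for s
    using translator_ivp_bounds[OF \<open>0 < R\<close> assms(3) that]
      translator_ivp_bounds[OF \<open>0 < R\<close> assms(4) that]
      translator_ivp_pos[OF assms(1,2,3) that] translator_ivp_pos[OF assms(1,2,4) that]
    by (intro translator_rhs_lipschitz) (use assms that in auto)
qed (use assms in \<open>auto simp: translator_ivp_iff\<close>)

text \<open>The translator field is only locally Lipschitz; clamping \<open>y\<close> to \<open>[a, b]\<close> makes it globally
  Lipschitz and bounded, and the barriers in the next proof show that the clamp is never active.\<close>

lemma clamped_translator_ode_exists: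
  assumes "0 < R" "0 \<le> a" "a \<le> b"
  shows "\<exists>x. x R = y0 \<and>
           (\<forall>t\<ge>R. (x has_real_derivative translator_rhs t (max a (min b (x t)))) (at t within {R..}))"
proof -
  define G where "G s y = translator_rhs (max R s) (max a (min b y))" for s y
  define L where "L = 4 * b + coth R * (1 + 3 * b\<^sup>2)"
  have "0 \<le> L" using assms coth_gt_1[of R] by (simp add: L_def)
  have "\<exists>x. x R = y0 \<and> (\<forall>t\<ge>R. (x has_real_derivative G t (x t)) (at t within {R..}))"
  proof (rule lipschitz_ode_exists[where L = L and M = "(1 + b\<^sup>2) * (2 + b * coth R)"])
    show "continuous_on UNIV (\<lambda>p. G (fst p) (snd p))"
      unfolding G_def by (rule continuous_on_translator_rhs_clamped[OF \<open>0 < R\<close>])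
    show "\<bar>G s y - G s z\<bar> \<le> L * \<bar>y - z\<bar>" for s y z
    proof -
      have "\<bar>G s y - G s z\<bar> \<le> L * \<bar>max a (min b y) - max a (min b z)\<bar>"
        unfolding G_def L_def using assms by (intro translator_rhs_lipschitz) auto
      also have "\<dots> \<le> L * \<bar>y - z\<bar>"
        using \<open>0 \<le> L\<close> by (intro mult_left_mono) (auto simp: max_def min_def abs_if)
      finally show ?thesis .
    qed
    show "\<bar>G s y\<bar> \<le> (1 + b\<^sup>2) * (2 + b * coth R)" for s y
      unfolding G_def using assms by (intro translator_rhs_bounded) auto
  qed
  thus ?thesis by (auto simp: G_def max_absorb2)
qed

lemma translator_ivp_exists:
  assumes "0 < R" "0 < \<phi>0"
  shows "\<exists>\<phi>. translator_ivp R \<phi>0 \<phi>"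
proof -
  define a where "a = min \<phi>0 (1 / coth R)"
  define b where "b = max \<phi>0 2"
  have "0 < a" "a \<le> b" using assms coth_gt_1[of R] by (auto simp: a_def b_def)
  then obtain x where "x R = \<phi>0"
    and der: "\<And>t. R \<le> t \<Longrightarrow> (x has_real_derivative translator_rhs t (max a (min b (x t)))) (at t within {R..})"
    using clamped_translator_ode_exists[OF \<open>0 < R\<close>, of a b \<phi>0] by auto
  have "a \<le> x t" if "R \<le> t" for t
  proof (rule stays_above[OF der _ _ that])
    show "0 < translator_rhs s (max a (min b (x s)))" if "R \<le> s" "x s < a" for s
    proof -
      have "max a (min b (x s)) = a" using that \<open>a \<le> b\<close> by simp
      moreover have "a \<le> 1 / coth R" by (simp add: a_def)
      ultimately show ?thesis using translator_rhs_pos[OF \<open>0 < R\<close> \<open>R \<le> s\<close>] by simp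
    qed
    show "a \<le> x R" unfolding \<open>x R = \<phi>0\<close> a_def by simp
  qed
  moreover have "x t \<le> b" if "R \<le> t" for t
  proof (rule stays_below[OF der _ _ that])
    show "translator_rhs s (max a (min b (x s))) < 0" if "R \<le> s" "b < x s" for s
      using that \<open>a \<le> b\<close> \<open>0 < R\<close> translator_rhs_neg[of s b] by (simp add: b_def)
    show "x R \<le> b" unfolding \<open>x R = \<phi>0\<close> b_def by simp
  qed
  ultimately have "translator_ivp R \<phi>0 x"
    using der \<open>x R = \<phi>0\<close> by (auto simp: translator_ivp_iff)
  thus ?thesis by blast
qed

lemma translator_ivp_eventually_less:
  assumes "0 < R" "0 < \<phi>0" "translator_ivp R \<phi>0 \<phi>" "2 < c"
  shows "\<forall>\<^sub>F t in at_top. \<phi> t < c"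
proof -
  define \<theta> where "\<theta> = (2 + c) / 2"
  have "\<forall>\<^sub>F t in at_top. \<phi> t \<le> \<theta>"
  proof (rule eventually_le_if_derivative_le_neg[where R = R and \<eta> = "\<theta> - 2"])
    show "(\<phi> has_real_derivative translator_rhs t (\<phi> t)) (at t within {R..})" if "R \<le> t" for t
      using assms(3) that by (simp add: translator_ivp_iff)
    show "translator_rhs t (\<phi> t) \<le> - (\<theta> - 2)" if "R \<le> t" "\<theta> \<le> \<phi> t" for t
    proof -
      have "2 \<le> \<phi> t" using that \<open>2 < c\<close> by (simp add: \<theta>_def)
      hence "translator_rhs t (\<phi> t) \<le> 2 - \<phi> t" using translator_rhs_le \<open>0 < R\<close> that by simp
      thus ?thesis using that by simp
    qed
    show "min \<phi>0 (1 / coth R) \<le> \<phi> t" if "R \<le> t" for t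
      using translator_ivp_bounds[OF \<open>0 < R\<close> assms(3) that] by simp
  qed (use \<open>2 < c\<close> in \<open>simp add: \<theta>_def\<close>)
  thus ?thesis by eventually_elim (use \<open>2 < c\<close> in \<open>simp add: \<theta>_def\<close>)
qed

lemma translator_ivp_eventually_greater:
  assumes "0 < R" "0 < \<phi>0" "translator_ivp R \<phi>0 \<phi>" "c < 2"
  shows "\<forall>\<^sub>F t in at_top. c < \<phi> t"
proof -
  define \<theta> where "\<theta> = (max c 1 + 2) / 2"
  define \<kappa> where "\<kappa> = (1 + 2 / \<theta>) / 2"
  have "1 < \<theta>" "\<theta> < 2" "c < \<theta>" using \<open>c < 2\<close> by (auto simp: \<theta>_def)
  have "\<theta> * \<kappa> = (\<theta> + 2) / 2" "1 < \<kappa>"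
    using \<open>1 < \<theta>\<close> \<open>\<theta> < 2\<close> by (auto simp: \<kappa>_def field_simps)
  have "\<forall>\<^sub>F t in at_top. coth t < \<kappa>"
    using order_tendstoD(2)[OF tendsto_coth_at_top \<open>1 < \<kappa>\<close>] .
  then obtain N where N: "\<And>t. N \<le> t \<Longrightarrow> coth t < \<kappa>" by (auto simp: eventually_at_top_linorder)
  define R' where "R' = max R N"
  have "\<forall>\<^sub>F t in at_top. \<theta> \<le> \<phi> t"
  proof (rule eventually_ge_if_derivative_ge_pos
      [where R = R' and \<eta> = "2 - \<theta> * \<kappa>" and hi = "max \<phi>0 2"])
    show "(\<phi> has_real_derivative translator_rhs t (\<phi> t)) (at t within {R'..})" if "R' \<le> t" for t
      using assms(3) that has_field_derivative_subset[of \<phi> _ t "{R..}" "{R'..}"]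
      by (auto simp: translator_ivp_iff R'_def)
    show "2 - \<theta> * \<kappa> \<le> translator_rhs t (\<phi> t)" if "R' \<le> t" "\<phi> t \<le> \<theta>" for t
    proof (rule translator_rhs_ge)
      show "0 \<le> \<phi> t"
        using translator_ivp_pos[OF assms(1-3), of t] that by (simp add: R'_def)
    qed (use that N[THEN less_imp_le] \<open>0 < R\<close> \<open>\<theta> * \<kappa> = (\<theta> + 2) / 2\<close> \<open>\<theta> < 2\<close>
        in \<open>auto simp: R'_def\<close>)
    show "\<phi> t \<le> max \<phi>0 2" if "R' \<le> t" for t
      using translator_ivp_bounds[OF \<open>0 < R\<close> assms(3), of t] that by (simp add: R'_def)
  qed (use \<open>\<theta> * \<kappa> = (\<theta> + 2) / 2\<close> \<open>\<theta> < 2\<close> in simp)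
  thus ?thesis by eventually_elim (use \<open>c < \<theta>\<close> in simp)
qed

lemma translator_ivp_tendsto_2:
  assumes "0 < R" "0 < \<phi>0" "translator_ivp R \<phi>0 \<phi>"
  shows "(\<phi> \<longlongrightarrow> 2) at_top"
  using translator_ivp_eventually_greater[OF assms] translator_ivp_eventually_less[OF assms]
  by (rule order_tendstoI)

theorem lemma4p1:
  fixes R \<phi>0 :: real
  assumes "R > 0" and "\<phi>0 > 0"
  shows "\<exists>\<phi>. smooth_on_real {R..} \<phi> \<and> translator_ivp R \<phi>0 \<phi> \<and>
           (\<forall>\<psi>. smooth_on_real {R..} \<psi> \<and> translator_ivp R \<phi>0 \<psi> \<longrightarrow>
                 (\<forall>r\<in>{R..}. \<psi> r = \<phi> r)) \<and>
           (\<phi> \<longlongrightarrow> 2) at_top"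
proof -
  obtain \<phi> where ivp: "translator_ivp R \<phi>0 \<phi>"
    using translator_ivp_exists[OF assms] by blast
  show ?thesis
  proof (intro exI[of _ \<phi>] conjI allI impI ballI)
    show "smooth_on_real {R..} \<phi>" by (rule smooth_on_real_if_translator_ivp[OF \<open>R > 0\<close> ivp])
    show "translator_ivp R \<phi>0 \<phi>" by (rule ivp)
    show "\<psi> r = \<phi> r" if "smooth_on_real {R..} \<psi> \<and> translator_ivp R \<phi>0 \<psi>" "r \<in> {R..}" for \<psi> r
      using translator_ivp_unique[OF assms ivp] that by simp
    show "(\<phi> \<longlongrightarrow> 2) at_top" by (rule translator_ivp_tendsto_2[OF assms ivp])
  qed
qed

end
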